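(* For all terms $P,Q$ of $\mathcal{L}$: if $P\equiv Q$ or $P\sim_{\mathrm{HOIO}}Q$, then $d(P)=d(Q)$.
   Context: Calculus $\mathcal{L}$: names are constants ($a,b,c,d$) or name variables ($x,y,z$), $m,n$ range over names; process variables $X,Y,Z$. Terms: $P,Q::=0\mid X\mid m(X).P\mid \overline{m}(Q)\mid P|Q\mid \langle X\rangle P\mid P\langle Q\rangle\mid\langle x\rangle P\mid P\langle n\rangle$, with the usual binders, identified up to $\alpha$-conversion, well-typed and with terminating applications. Structural congruence $\equiv$: smallest congruence with associativity and commutativity of $|$, $P|0\equiv P$, $(\langle X\rangle P)\langle Q\rangle\equiv P\{Q/X\}$, $(\langle x\rangle P)\langle m\rangle\equiv P\{m/x\}$. Transitions: $m(X).P\xrightarrow{m(X)}P$; $\overline{m}Q\xrightarrow{\overline{m}Q}0$; $P\xrightarrow{\lambda}P'$ implies $P|Q\xrightarrow{\lambda}P'|Q$; $P\xrightarrow{\overline{m}A}P'$, $Q\xrightarrow{m(X)}Q'$ imply $P|Q\xrightarrow{\tau}P'|Q'\{A/X\}$; symmetric versions; closure under $\equiv$. Depth $d$: $d(0)=0$, $d(X)=1$, $d(m(X).P)=d(P)+1$, $d(\overline{m}(P))=d(P)+1$, $d(P_1|P_2)=d(P_1)+d(P_2)$, $d(\langle X\rangle P)=d(P)+1$, $d(X\langle P\rangle)=d(P)+1$, $d((\langle Y\rangle P_3)\langle P_2\rangle)=d(P_3\{P_2/Y\})$, $d(\langle x\rangle P)=d(P)+1$, $d(X\langle n\rangle)=1$,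 $d((\langle y\rangle P_3)\langle n\rangle)=d(P_3\{n/y\})$. Strong HO-IO bisimulation: symmetric $R$ on terms such that $P\,R\,Q$ implies: (1) if $P$ is a non-abstraction (not of form $\langle Y\rangle A$ or $\langle y\rangle A$) so is $Q$; (2) if $P=\langle Y\rangle A$ then $Q=\langle Y\rangle B$, $A\,R\,B$; (3) if $P=\langle y\rangle A$ then $Q=\langle y\rangle B$, $A\,R\,B$; (4) if $P\xrightarrow{\overline{a}A}P'$ then $Q\xrightarrow{\overline{a}B}Q'$, $A\,R\,B$, $P'\,R\,Q'$; (5) if $P\xrightarrow{a(X)}P'$ then $Q\xrightarrow{a(X)}Q'$, $P'\,R\,Q'$; (6) if $P\equiv X|P'$ then $Q\equiv X|Q'$, $P'\,R\,Q'$; (7) if $P\equiv X\langle A\rangle|P'$ then $Q\equiv X\langle B\rangle|Q'$, $A\,R\,B$, $P'\,R\,Q'$; (8) if $P\equiv X\langle d\rangle|P'$ then $Q\equiv X\langle d\rangle|Q'$, $P'\,R\,Q'$. $\sim_{\mathrm{HOIO}}$ is the largest such relation. *)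

theory Defs
  imports Main
begin

section \<open>Syntax of the calculus L (de Bruijn representation, so terms are identified up to alpha)\<close>

text \<open>Names: constants (a,b,c,d,...) and name variables (de Bruijn indices).\<close>
datatype name = NC nat | NV nat

text \<open>Process variables are de Bruijn indices PV i.
  Inp m P = m(X).P (binds a process variable), Out m Q = m-bar(Q),
  PAbs P = <X>P (binds a process variable), PApp P Q = P<Q>,
  NAbs P = <x>P (binds a name variable), NApp P n = P<n>.\<close>
datatype trm =
    Nil
  | PV nat
  | Inp name trm
  | Out name trm
  | Par trm trm
  | PAbs trm
  | PApp trm trm
  | NAbs trm
  | NApp trm name

fun liftNm :: "nat \<Rightarrow> name \<Rightarrow> name" where
  "liftNm k (NC c) = NC c"
| "liftNm k (NV i) = (if i < k then NV i else NV (Suc i))"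

fun substNm :: "nat \<Rightarrow> name \<Rightarrow> name \<Rightarrow> name" where
  "substNm k n (NC c) = NC c"
| "substNm k n (NV i) = (if i < k then NV i else if i = k then n else NV (i - 1))"

fun liftN :: "nat \<Rightarrow> trm \<Rightarrow> trm" where
  "liftN k Nil = Nil"
| "liftN k (PV i) = PV i"
| "liftN k (Inp m P) = Inp (liftNm k m) (liftN k P)"
| "liftN k (Out m P) = Out (liftNm k m) (liftN k P)"
| "liftN k (Par P Q) = Par (liftN k P) (liftN k Q)"
| "liftN k (PAbs P) = PAbs (liftN k P)"
| "liftN k (PApp P Q) = PApp (liftN k P) (liftN k Q)"
| "liftN k (NAbs P) = NAbs (liftN (Suc k) P)"
| "liftN k (NApp P m) = NApp (liftN k P) (liftNm k m)"

fun liftP :: "nat \<Rightarrow> trm \<Rightarrow> trm" where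
  "liftP k Nil = Nil"
| "liftP k (PV i) = (if i < k then PV i else PV (Suc i))"
| "liftP k (Inp m P) = Inp m (liftP (Suc k) P)"
| "liftP k (Out m P) = Out m (liftP k P)"
| "liftP k (Par P Q) = Par (liftP k P) (liftP k Q)"
| "liftP k (PAbs P) = PAbs (liftP (Suc k) P)"
| "liftP k (PApp P Q) = PApp (liftP k P) (liftP k Q)"
| "liftP k (NAbs P) = NAbs (liftP k P)"
| "liftP k (NApp P m) = NApp (liftP k P) m"

text \<open>substP k Q P = P{Q/X_k} (capture-avoiding; indices above k are decremented).\<close>
fun substP :: "nat \<Rightarrow> trm \<Rightarrow> trm \<Rightarrow> trm" where
  "substP k Q Nil = Nil"
| "substP k Q (PV i) = (if i < k then PV i else if i = k then Q else PV (i - 1))"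
| "substP k Q (Inp m P) = Inp m (substP (Suc k) (liftP 0 Q) P)"
| "substP k Q (Out m P) = Out m (substP k Q P)"
| "substP k Q (Par P1 P2) = Par (substP k Q P1) (substP k Q P2)"
| "substP k Q (PAbs P) = PAbs (substP (Suc k) (liftP 0 Q) P)"
| "substP k Q (PApp P1 P2) = PApp (substP k Q P1) (substP k Q P2)"
| "substP k Q (NAbs P) = NAbs (substP k (liftN 0 Q) P)"
| "substP k Q (NApp P m) = NApp (substP k Q P) m"

fun substN :: "nat \<Rightarrow> name \<Rightarrow> trm \<Rightarrow> trm" where
  "substN k n Nil = Nil"
| "substN k n (PV i) = PV i"
| "substN k n (Inp m P) = Inp (substNm k n m) (substN k n P)"
| "substN k n (Out m P) = Out (substNm k n m) (substN k n P)"
| "substN k n (Par P Q) = Par (substN k n P) (substN k n Q)"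
| "substN k n (PAbs P) = PAbs (substN k n P)"
| "substN k n (PApp P Q) = PApp (substN k n P) (substN k n Q)"
| "substN k n (NAbs P) = NAbs (substN (Suc k) (liftNm 0 n) P)"
| "substN k n (NApp P m) = NApp (substN k n P) (substNm k n m)"

text \<open>Pr: processes; PArrT s: abstractions over a process variable of type s (body a process);
  NArrT: abstractions over a name (body a process).\<close>
datatype ty = Pr | PArrT ty | NArrT

definition ext_ctx :: "ty \<Rightarrow> (nat \<Rightarrow> ty) \<Rightarrow> (nat \<Rightarrow> ty)" where
  "ext_ctx s G = (\<lambda>i. case i of 0 \<Rightarrow> s | Suc j \<Rightarrow> G j)"

inductive typed :: "(nat \<Rightarrow> ty) \<Rightarrow> trm \<Rightarrow> ty \<Rightarrow> bool" where
  t_nil:  "typed G Nil Pr"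
| t_var:  "typed G (PV i) (G i)"
| t_inp:  "typed (ext_ctx s G) P Pr \<Longrightarrow> typed G (Inp m P) Pr"
| t_out:  "typed G Q s \<Longrightarrow> typed G (Out m Q) Pr"
| t_par:  "typed G P Pr \<Longrightarrow> typed G Q Pr \<Longrightarrow> typed G (Par P Q) Pr"
| t_pabs: "typed (ext_ctx s G) P Pr \<Longrightarrow> typed G (PAbs P) (PArrT s)"
| t_papp: "typed G P (PArrT s) \<Longrightarrow> typed G Q s \<Longrightarrow> typed G (PApp P Q) Pr"
| t_nabs: "typed G P Pr \<Longrightarrow> typed G (NAbs P) NArrT"
| t_napp: "typed G P NArrT \<Longrightarrow> typed G (NApp P n) Pr"

definition well_typed :: "trm \<Rightarrow> bool" where
  "well_typed P \<longleftrightarrow> (\<exists>G s. typed G P s)"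

inductive beta :: "trm \<Rightarrow> trm \<Rightarrow> bool" where
  b_p:    "beta (PApp (PAbs P) Q) (substP 0 Q P)"
| b_n:    "beta (NApp (NAbs P) n) (substN 0 n P)"
| b_inp:  "beta P P' \<Longrightarrow> beta (Inp m P) (Inp m P')"
| b_out:  "beta P P' \<Longrightarrow> beta (Out m P) (Out m P')"
| b_parl: "beta P P' \<Longrightarrow> beta (Par P Q) (Par P' Q)"
| b_parr: "beta Q Q' \<Longrightarrow> beta (Par P Q) (Par P Q')"
| b_pabs: "beta P P' \<Longrightarrow> beta (PAbs P) (PAbs P')"
| b_appl: "beta P P' \<Longrightarrow> beta (PApp P Q) (PApp P' Q)"
| b_appr: "beta Q Q' \<Longrightarrow> beta (PApp P Q) (PApp P Q')"
| b_nabs: "beta P P' \<Longrightarrow> beta (NAbs P) (NAbs P')"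
| b_napp: "beta P P' \<Longrightarrow> beta (NApp P n) (NApp P' n)"

inductive SN :: "trm \<Rightarrow> bool" where
  SN_intro: "(\<And>Q. beta P Q \<Longrightarrow> SN Q) \<Longrightarrow> SN P"

inductive scong :: "trm \<Rightarrow> trm \<Rightarrow> bool" (infix "\<equiv>s" 50) where
  sc_refl:   "P \<equiv>s P"
| sc_sym:    "P \<equiv>s Q \<Longrightarrow> Q \<equiv>s P"
| sc_trans:  "P \<equiv>s Q \<Longrightarrow> Q \<equiv>s R \<Longrightarrow> P \<equiv>s R"
| sc_inp:    "P \<equiv>s P' \<Longrightarrow> Inp m P \<equiv>s Inp m P'"
| sc_out:    "P \<equiv>s P' \<Longrightarrow> Out m P \<equiv>s Out m P'"
| sc_par:    "P \<equiv>s P' \<Longrightarrow> Q \<equiv>s Q' \<Longrightarrow> Par P Q \<equiv>s Par P' Q'"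
| sc_pabs:   "P \<equiv>s P' \<Longrightarrow> PAbs P \<equiv>s PAbs P'"
| sc_papp:   "P \<equiv>s P' \<Longrightarrow> Q \<equiv>s Q' \<Longrightarrow> PApp P Q \<equiv>s PApp P' Q'"
| sc_nabs:   "P \<equiv>s P' \<Longrightarrow> NAbs P \<equiv>s NAbs P'"
| sc_napp:   "P \<equiv>s P' \<Longrightarrow> NApp P n \<equiv>s NApp P' n"
| sc_assoc:  "Par (Par P Q) R \<equiv>s Par P (Par Q R)"
| sc_comm:   "Par P Q \<equiv>s Par Q P"
| sc_nil:    "Par P Nil \<equiv>s P"
| sc_betaP:  "PApp (PAbs P) Q \<equiv>s substP 0 Q P"
| sc_betaN:  "NApp (NAbs P) n \<equiv>s substN 0 n P"

text \<open>LIn m: input m(X) (the derivative is the body, with X as de Bruijn index 0);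
  LOut m A: output of A on m; LTau: internal move.\<close>
datatype lab = LIn name | LOut name trm | LTau

inductive trans :: "trm \<Rightarrow> lab \<Rightarrow> trm \<Rightarrow> bool" where
  tr_inp:   "trans (Inp m P) (LIn m) P"
| tr_out:   "trans (Out m Q) (LOut m Q) Nil"
| tr_parl_in:  "trans P (LIn m) P' \<Longrightarrow> trans (Par P Q) (LIn m) (Par P' (liftP 0 Q))"
| tr_parl_out: "trans P (LOut m A) P' \<Longrightarrow> trans (Par P Q) (LOut m A) (Par P' Q)"
| tr_parl_tau: "trans P LTau P' \<Longrightarrow> trans (Par P Q) LTau (Par P' Q)"
| tr_parr_in:  "trans Q (LIn m) Q' \<Longrightarrow> trans (Par P Q) (LIn m) (Par (liftP 0 P) Q')"
| tr_parr_out: "trans Q (LOut m A) Q' \<Longrightarrow> trans (Par P Q) (LOut m A) (Par P Q')"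
| tr_parr_tau: "trans Q LTau Q' \<Longrightarrow> trans (Par P Q) LTau (Par P Q')"
| tr_coml: "trans P (LOut m A) P' \<Longrightarrow> trans Q (LIn m) Q' \<Longrightarrow>
              trans (Par P Q) LTau (Par P' (substP 0 A Q'))"
| tr_comr: "trans P (LIn m) P' \<Longrightarrow> trans Q (LOut m A) Q' \<Longrightarrow>
              trans (Par P Q) LTau (Par (substP 0 A P') Q')"
| tr_cong: "P \<equiv>s P1 \<Longrightarrow> trans P1 l P1' \<Longrightarrow> P1' \<equiv>s P' \<Longrightarrow> trans P l P'"

inductive dep :: "trm \<Rightarrow> nat \<Rightarrow> bool" where
  d_nil:  "dep Nil 0"
| d_var:  "dep (PV i) 1"
| d_inp:  "dep P k \<Longrightarrow> dep (Inp m P) (k + 1)"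
| d_out:  "dep P k \<Longrightarrow> dep (Out m P) (k + 1)"
| d_par:  "dep P1 k1 \<Longrightarrow> dep P2 k2 \<Longrightarrow> dep (Par P1 P2) (k1 + k2)"
| d_pabs: "dep P k \<Longrightarrow> dep (PAbs P) (k + 1)"
| d_vapp: "dep P k \<Longrightarrow> dep (PApp (PV i) P) (k + 1)"
| d_betaP: "dep (substP 0 P2 P3) k \<Longrightarrow> dep (PApp (PAbs P3) P2) k"
| d_nabs: "dep P k \<Longrightarrow> dep (NAbs P) (k + 1)"
| d_vnapp: "dep (NApp (PV i) n) 1"
| d_betaN: "dep (substN 0 n P3) k \<Longrightarrow> dep (NApp (NAbs P3) n) k"

definition depth :: "trm \<Rightarrow> nat" where
  "depth P = (THE k. dep P k)"

definition is_abstraction :: "trm \<Rightarrow> bool" where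
  "is_abstraction P \<longleftrightarrow> (\<exists>A. P = PAbs A) \<or> (\<exists>A. P = NAbs A)"

definition hoio_bisim :: "(trm \<Rightarrow> trm \<Rightarrow> bool) \<Rightarrow> bool" where
  "hoio_bisim R \<longleftrightarrow>
     (\<forall>P Q. R P Q \<longrightarrow> R Q P) \<and>
     (\<forall>P Q. R P Q \<longrightarrow>
        (\<not> is_abstraction P \<longrightarrow> \<not> is_abstraction Q) \<and>
        (\<forall>A. P = PAbs A \<longrightarrow> (\<exists>B. Q = PAbs B \<and> R A B)) \<and>
        (\<forall>A. P = NAbs A \<longrightarrow> (\<exists>B. Q = NAbs B \<and> R A B)) \<and>
        (\<forall>m A P'. trans P (LOut m A) P' \<longrightarrow>
            (\<exists>B Q'. trans Q (LOut m B) Q' \<and> R A B \<and> R P' Q')) \<and>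
        (\<forall>m P'. trans P (LIn m) P' \<longrightarrow> (\<exists>Q'. trans Q (LIn m) Q' \<and> R P' Q')) \<and>
        (\<forall>i P'. P \<equiv>s Par (PV i) P' \<longrightarrow> (\<exists>Q'. Q \<equiv>s Par (PV i) Q' \<and> R P' Q')) \<and>
        (\<forall>i A P'. P \<equiv>s Par (PApp (PV i) A) P' \<longrightarrow>
            (\<exists>B Q'. Q \<equiv>s Par (PApp (PV i) B) Q' \<and> R A B \<and> R P' Q')) \<and>
        (\<forall>i n P'. P \<equiv>s Par (NApp (PV i) n) P' \<longrightarrow>
            (\<exists>Q'. Q \<equiv>s Par (NApp (PV i) n) Q' \<and> R P' Q')))"

definition hoio_sim :: "trm \<Rightarrow> trm \<Rightarrow> bool" (infix "\<sim>HOIO" 50) where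
  "P \<sim>HOIO Q \<longleftrightarrow> (\<exists>R. hoio_bisim R \<and> R P Q)"

end

theory Submission
  imports Defs "HOL-Library.Confluence"
begin

(* Depth is invariant under parallel reduction (which may also drop a unit Nil) and under
   AC-rearrangement of parallel compositions. Parallel reduction is confluent and commutes with
   AC-equivalence, so structurally congruent terms reduce to AC-equivalent terms, and hence
   have the same depth once depth is measured on reducts.
   For bisimilar P and Q, a well-typed non-abstraction P is, up to structural congruence, either
   Nil or a prefix or variable-headed component in parallel with a rest. The bisimulation clause
   observing that component yields a matching one in Q, and strong induction on the depth of P
   gives depth P <= depth Q; symmetry gives the converse. *)


lemma rtranclp_map:
  "(\<And>x y. r x y \<Longrightarrow> s (f x) (f y)) \<Longrightarrow> r\<^sup>*\<^sup>* a b \<Longrightarrow> s\<^sup>*\<^sup>* (f a) (f b)"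
  by (erule rtranclp_induct) (auto intro: rtranclp.rtrancl_into_rtrancl)

lemma rtranclp_image_inv:
  assumes "\<And>x y. r (f x) y \<Longrightarrow> \<exists>x'. y = f x' \<and> r x x'"
  shows "r\<^sup>*\<^sup>* (f a) b \<Longrightarrow> \<exists>a'. b = f a' \<and> r\<^sup>*\<^sup>* a a'"
  by (induction rule: rtranclp_induct) (auto dest: assms intro: rtranclp.rtrancl_into_rtrancl)

lemma rtranclp_commute:
  assumes step: "\<And>a b c. R a b \<Longrightarrow> S b c \<Longrightarrow> \<exists>d. S\<^sup>*\<^sup>* a d \<and> R d c"
  shows "R\<^sup>*\<^sup>* a b \<Longrightarrow> S\<^sup>*\<^sup>* b c \<Longrightarrow> \<exists>d. S\<^sup>*\<^sup>* a d \<and> R\<^sup>*\<^sup>* d c"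
proof -
  have one_many: "\<exists>d. S\<^sup>*\<^sup>* a d \<and> R d c" if "S\<^sup>*\<^sup>* b c" "R a b" for a b c
    using that by (induction arbitrary: a rule: converse_rtranclp_induct)
      (blast, meson step rtranclp_trans)
  show "R\<^sup>*\<^sup>* a b \<Longrightarrow> S\<^sup>*\<^sup>* b c \<Longrightarrow> \<exists>d. S\<^sup>*\<^sup>* a d \<and> R\<^sup>*\<^sup>* d c"
    by (induction arbitrary: c rule: converse_rtranclp_induct)
      (blast, meson one_many rtranclp_trans converse_rtranclp_into_rtranclp)
qed


lemma liftNm_liftNm: "i \<le> j \<Longrightarrow> liftNm i (liftNm j n) = liftNm (Suc j) (liftNm i n)"
  by (cases n) auto

lemma substNm_liftNm: "substNm k m (liftNm k n) = n"
  by (cases n) auto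

lemma liftNm_substNm_le:
  "i \<le> k \<Longrightarrow> liftNm i (substNm k n x) = substNm (Suc k) (liftNm i n) (liftNm i x)"
  by (cases x) auto

lemma liftNm_substNm_ge:
  "j \<le> i \<Longrightarrow> liftNm i (substNm j n x) = substNm j (liftNm i n) (liftNm (Suc i) x)"
  by (cases x) auto

lemma substNm_substNm:
  "j \<le> k \<Longrightarrow>
    substNm k n (substNm j m x) = substNm j (substNm k n m) (substNm (Suc k) (liftNm j n) x)"
  by (cases x) (auto simp: substNm_liftNm)

lemma liftP_liftP: "i \<le> j \<Longrightarrow> liftP i (liftP j X) = liftP (Suc j) (liftP i X)"
  by (induction X arbitrary: i j) auto

lemma liftN_liftN: "i \<le> j \<Longrightarrow> liftN i (liftN j X) = liftN (Suc j) (liftN i X)"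
  by (induction X arbitrary: i j) (auto simp: liftNm_liftNm)

lemma liftP_liftN: "liftP i (liftN j X) = liftN j (liftP i X)"
  by (induction X arbitrary: i j) auto

lemma substP_liftP: "substP k Q (liftP k X) = X"
  by (induction X arbitrary: k Q) auto

lemma substN_liftN: "substN k n (liftN k X) = X"
  by (induction X arbitrary: k n) (auto simp: substNm_liftNm)

lemma substN_liftP: "substN k n (liftP j X) = liftP j (substN k n X)"
  by (induction X arbitrary: k n j) auto

lemma liftN_substP: "liftN k (substP j Q X) = substP j (liftN k Q) (liftN k X)"
  by (induction X arbitrary: k j Q) (auto simp: liftP_liftN liftN_liftN)

lemma liftP_substP_le:
  "i \<le> k \<Longrightarrow> liftP i (substP k Q X) = substP (Suc k) (liftP i Q) (liftP i X)"
  by (induction X arbitrary: i k Q) (auto simp: liftP_liftP liftP_liftN)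

lemma liftP_substP_ge:
  "j \<le> i \<Longrightarrow> liftP i (substP j Q X) = substP j (liftP i Q) (liftP (Suc i) X)"
  by (induction X arbitrary: i j Q) (auto simp: liftP_liftP liftP_liftN)

lemma liftN_substN_le:
  "i \<le> k \<Longrightarrow> liftN i (substN k n X) = substN (Suc k) (liftNm i n) (liftN i X)"
  by (induction X arbitrary: i k n) (auto simp: liftNm_substNm_le liftNm_liftNm)

lemma liftN_substN_ge:
  "j \<le> i \<Longrightarrow> liftN i (substN j n X) = substN j (liftNm i n) (liftN (Suc i) X)"
  by (induction X arbitrary: i j n) (auto simp: liftNm_substNm_ge liftNm_liftNm)

lemma substN_substP: "substN k n (substP j Q X) = substP j (substN k n Q) (substN k n X)"
  by (induction X arbitrary: k n j Q) (auto simp: substN_liftP liftN_substN_le)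

lemma substP_substN: "substP k Q (substN j n X) = substN j n (substP k (liftN j Q) X)"
  by (induction X arbitrary: k Q j n) (auto simp: substN_liftN liftN_liftN liftP_liftN)

lemma substP_substP:
  "j \<le> i \<Longrightarrow>
    substP i Q (substP j R X) = substP j (substP i Q R) (substP (Suc i) (liftP j Q) X)"
  by (induction X arbitrary: i j Q R)
    (auto simp: substP_liftP liftP_substP_le liftP_liftP liftN_substP liftP_liftN)

lemma substN_substN:
  "j \<le> k \<Longrightarrow>
    substN k n (substN j m X) = substN j (substNm k n m) (substN (Suc k) (liftNm j n) X)"
  by (induction X arbitrary: j k n m) (auto simp: substNm_substNm liftNm_liftNm liftNm_substNm_le)


definition ctx_ins :: "nat \<Rightarrow> ty \<Rightarrow> (nat \<Rightarrow> ty) \<Rightarrow> nat \<Rightarrow> ty" where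
  "ctx_ins k t G = (\<lambda>i. if i < k then G i else if i = k then t else G (i - 1))"

definition ctx_del :: "nat \<Rightarrow> (nat \<Rightarrow> ty) \<Rightarrow> nat \<Rightarrow> ty" where
  "ctx_del k G = (\<lambda>i. if i < k then G i else G (Suc i))"

lemma ext_ctx_simps [simp]: "ext_ctx s G 0 = s" "ext_ctx s G (Suc k) = G k"
  by (auto simp: ext_ctx_def)

lemma ext_ctx_eq_ctx_ins: "ext_ctx s G = ctx_ins 0 s G"
  by (auto simp: ext_ctx_def ctx_ins_def split: nat.split)

lemma ctx_ins_ext_ctx: "ctx_ins (Suc k) t (ext_ctx s G) = ext_ctx s (ctx_ins k t G)"
  by (auto simp: ext_ctx_def ctx_ins_def split: nat.split)

lemma ctx_del_ext_ctx: "ctx_del (Suc k) (ext_ctx s G) = ext_ctx s (ctx_del k G)"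
  by (auto simp: ext_ctx_def ctx_del_def split: nat.split)

lemma ctx_del_0_ext_ctx: "ctx_del 0 (ext_ctx s G) = G"
  by (auto simp: ext_ctx_def ctx_del_def split: nat.split)

lemma typed_PV: "T = G i \<Longrightarrow> typed G (PV i) T"
  using t_var by simp

inductive_cases typed_InpE: "typed G (Inp m X) s"
inductive_cases typed_OutE: "typed G (Out m X) s"
inductive_cases typed_ParE: "typed G (Par X Y) s"
inductive_cases typed_PAbsE: "typed G (PAbs X) s"
inductive_cases typed_PAppE: "typed G (PApp X Y) s"
inductive_cases typed_NAbsE: "typed G (NAbs X) s"
inductive_cases typed_NAppE: "typed G (NApp X n) s"

lemma typed_liftP: "typed G X s \<Longrightarrow> typed (ctx_ins k t G) (liftP k X) s"
proof (induction arbitrary: k rule: typed.induct)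
  case (t_var G i)
  then show ?case by (auto simp: ctx_ins_def intro!: typed_PV)
next
  case (t_inp s G P m)
  then show ?case using typed.t_inp[of s "ctx_ins k t G"] by (simp add: ctx_ins_ext_ctx[symmetric])
next
  case (t_pabs s G P)
  then show ?case using typed.t_pabs[of s "ctx_ins k t G"] by (simp add: ctx_ins_ext_ctx[symmetric])
qed (auto intro: typed.intros)

lemma typed_liftP_0: "typed G X t \<Longrightarrow> typed (ext_ctx s G) (liftP 0 X) t"
  using typed_liftP[of G X t 0 s] by (simp add: ext_ctx_eq_ctx_ins)

lemma typed_liftN: "typed G X s \<Longrightarrow> typed G (liftN k X) s"
  by (induction arbitrary: k rule: typed.induct) (auto intro: typed.intros)

lemma typed_substN: "typed G X s \<Longrightarrow> typed G (substN k n X) s"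
  by (induction arbitrary: k n rule: typed.induct) (simp_all, (metis typed.intros)+)

lemma typed_substP:
  "typed G X s \<Longrightarrow> typed (ctx_del k G) Q (G k) \<Longrightarrow> typed (ctx_del k G) (substP k Q X) s"
proof (induction arbitrary: k Q rule: typed.induct)
  case (t_var G i)
  then show ?case by (auto simp: ctx_del_def intro!: typed_PV)
next
  case (t_inp s G P m)
  have "typed (ext_ctx s (ctx_del k G)) (liftP 0 Q) (G k)"
    using t_inp.prems by (rule typed_liftP_0)
  then show ?case using t_inp.IH[of "Suc k"] by (auto simp: ctx_del_ext_ctx intro: typed.intros)
next
  case (t_pabs s G P)
  have "typed (ext_ctx s (ctx_del k G)) (liftP 0 Q) (G k)"
    using t_pabs.prems by (rule typed_liftP_0)
  then show ?case using t_pabs.IH[of "Suc k"] by (auto simp: ctx_del_ext_ctx intro: typed.intros)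
next
  case (t_papp G P s Q)
  then show ?case by simp (blast intro: typed.t_papp)
qed (auto intro: typed.intros typed_liftN)

lemma typed_betaP: "typed G (PApp (PAbs X) Q) s \<Longrightarrow> typed G (substP 0 Q X) s"
  using typed_substP[of "ext_ctx _ G" X Pr 0 Q]
  by (auto simp: ctx_del_0_ext_ctx elim!: typed_PAppE typed_PAbsE)

lemma typed_betaN: "typed G (NApp (NAbs X) n) s \<Longrightarrow> typed G (substN 0 n X) s"
  by (auto elim!: typed_NAppE typed_NAbsE intro: typed_substN)

lemma typed_beta: "beta P P' \<Longrightarrow> typed G P s \<Longrightarrow> typed G P' s"
proof (induction arbitrary: G s rule: beta.induct)
  case (b_p P Q) then show ?case by (rule typed_betaP)
next
  case (b_n P n) then show ?case by (rule typed_betaN)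
qed (auto elim!: typed_PAbsE typed_NAbsE typed_InpE typed_OutE typed_ParE typed_PAppE typed_NAppE
      intro: typed.intros)

lemma typed_non_process:
  "typed G P s \<Longrightarrow> s \<noteq> Pr \<Longrightarrow> (\<exists>i. P = PV i) \<or> is_abstraction P"
  by (induction rule: typed.induct) (auto simp: is_abstraction_def)


inductive subterm :: "trm \<Rightarrow> trm \<Rightarrow> bool" where
  subterm_refl: "subterm P P"
| subterm_Inp: "subterm S A \<Longrightarrow> subterm S (Inp m A)"
| subterm_Out: "subterm S A \<Longrightarrow> subterm S (Out m A)"
| subterm_Par1: "subterm S A \<Longrightarrow> subterm S (Par A B)"
| subterm_Par2: "subterm S B \<Longrightarrow> subterm S (Par A B)"
| subterm_PAbs: "subterm S A \<Longrightarrow> subterm S (PAbs A)"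
| subterm_PApp1: "subterm S A \<Longrightarrow> subterm S (PApp A B)"
| subterm_PApp2: "subterm S B \<Longrightarrow> subterm S (PApp A B)"
| subterm_NAbs: "subterm S A \<Longrightarrow> subterm S (NAbs A)"
| subterm_NApp: "subterm S A \<Longrightarrow> subterm S (NApp A n)"

lemma subterm_trans: "subterm S P \<Longrightarrow> subterm T S \<Longrightarrow> subterm T P"
  by (induction rule: subterm.induct) (auto intro: subterm.intros)

lemma subterm_immediate:
  "subterm (Inp m A) P \<Longrightarrow> subterm A P" "subterm (Out m A) P \<Longrightarrow> subterm A P"
  "subterm (Par A B) P \<Longrightarrow> subterm A P" "subterm (Par A B) P \<Longrightarrow> subterm B P"
  "subterm (PAbs A) P \<Longrightarrow> subterm A P" "subterm (NAbs A) P \<Longrightarrow> subterm A P"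
  "subterm (PApp A B) P \<Longrightarrow> subterm B P"
  by (meson subterm_trans subterm.intros)+

lemma subterm_beta: "subterm S P \<Longrightarrow> beta S S' \<Longrightarrow> \<exists>P'. beta P P' \<and> subterm S' P'"
  by (induction rule: subterm.induct) (auto intro: subterm.intros beta.intros)

text \<open>A redex inside \<open>P\<close> is contracted by a step of \<open>P\<close> itself, so the depth of the contractum
  is covered by the hypothesis of the outer induction on \<open>SN P\<close>.\<close>
lemma dep_exists_subterm:
  assumes "SN P"
  shows "subterm S P \<Longrightarrow> typed G S s \<Longrightarrow> \<exists>k. dep S k"
  using assms
proof (induction arbitrary: S G s rule: SN.induct)
  case (SN_intro P)
  have beta_reduct: "\<exists>k. dep S' k"
    if sub: "subterm S P" and typing: "typed G S s" and red: "beta S S'" for S S' G s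
  proof -
    obtain P' where "beta P P'" "subterm S' P'" using subterm_beta sub red by blast
    moreover have "typed G S' s" using typed_beta red typing by blast
    ultimately show ?thesis using SN_intro.IH by blast
  qed
  from SN_intro.prems show ?case
  proof (induction S arbitrary: G s)
    case (PApp A B)
    then obtain t where "typed G A (PArrT t)" and tB: "typed G B t" by (auto elim: typed_PAppE)
    then consider (var) i where "A = PV i" | (abs) X where "A = PAbs X"
      by (cases A) (auto elim: typed.cases)
    then show ?case
    proof cases
      case var
      then show ?thesis using PApp.IH(2) PApp.prems(1) tB by (blast intro: d_vapp subterm_immediate)
    next
      case abs
      then show ?thesis using beta_reduct[OF PApp.prems] by (blast intro: d_betaP beta.intros)
    qed
  next
    case (NApp A n)
    then have "typed G A NArrT" by (auto elim: typed_NAppE)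
    then consider (var) i where "A = PV i" | (abs) X where "A = NAbs X"
      by (cases A) (auto elim: typed.cases)
    then show ?case
    proof cases
      case var
      then show ?thesis by (blast intro: d_vnapp)
    next
      case abs
      then show ?thesis using beta_reduct[OF NApp.prems] by (blast intro: d_betaN beta.intros)
    qed
  next
    case (Inp m A)
    then show ?case by (blast elim: typed_InpE dest: subterm_immediate intro: d_inp)
  next
    case (Out m A)
    then show ?case by (blast elim: typed_OutE dest: subterm_immediate intro: d_out)
  next
    case (Par A B)
    then show ?case by (blast elim: typed_ParE dest: subterm_immediate intro: d_par)
  next
    case (PAbs A)
    then show ?case by (blast elim: typed_PAbsE dest: subterm_immediate intro: d_pabs)
  next
    case (NAbs A)
    then show ?case by (blast elim: typed_NAbsE dest: subterm_immediate intro: d_nabs)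
  qed (blast intro: dep.intros)+
qed

lemma dep_exists: "SN P \<Longrightarrow> typed G P s \<Longrightarrow> \<exists>k. dep P k"
  using dep_exists_subterm subterm_refl by blast

inductive_cases dep_NilE: "dep Nil k"
inductive_cases dep_PVE: "dep (PV i) k"
inductive_cases dep_InpE: "dep (Inp m X) k"
inductive_cases dep_OutE: "dep (Out m X) k"
inductive_cases dep_ParE: "dep (Par X Y) k"
inductive_cases dep_PAbsE: "dep (PAbs X) k"
inductive_cases dep_NAbsE: "dep (NAbs X) k"
inductive_cases dep_PAppE: "dep (PApp X Y) k"
inductive_cases dep_NAppE: "dep (NApp X n) k"

lemma dep_unique: "dep P k \<Longrightarrow> dep P k' \<Longrightarrow> k = k'"
proof (induction arbitrary: k' rule: dep.induct)
  case (d_inp P k m) from d_inp.prems show ?case by (rule dep_InpE) (simp add: d_inp.IH)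
next
  case (d_out P k m) from d_out.prems show ?case by (rule dep_OutE) (simp add: d_out.IH)
next
  case (d_par P1 k1 P2 k2) from d_par.prems show ?case by (rule dep_ParE) (simp add: d_par.IH)
next
  case (d_pabs P k) from d_pabs.prems show ?case by (rule dep_PAbsE) (simp add: d_pabs.IH)
next
  case (d_nabs P k) from d_nabs.prems show ?case by (rule dep_NAbsE) (simp add: d_nabs.IH)
next
  case (d_vapp P k i) from d_vapp.prems show ?case by (rule dep_PAppE) (simp_all add: d_vapp.IH)
next
  case (d_betaP P2 P3 k)
  from d_betaP.prems show ?case by (rule dep_PAppE) (simp_all add: d_betaP.IH)
next
  case (d_betaN n P3 k) from d_betaN.prems show ?case by (rule dep_NAppE) (simp_all add: d_betaN.IH)
qed (auto elim: dep_NilE dep_PVE dep_NAppE)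

lemma depth_eqI: "dep P k \<Longrightarrow> depth P = k"
  unfolding depth_def using dep_unique by blast


section \<open>Parallel reduction\<close>

inductive par_red :: "trm \<Rightarrow> trm \<Rightarrow> bool" where
  pr_nil: "par_red Nil Nil"
| pr_var: "par_red (PV i) (PV i)"
| pr_inp: "par_red P P' \<Longrightarrow> par_red (Inp m P) (Inp m P')"
| pr_out: "par_red P P' \<Longrightarrow> par_red (Out m P) (Out m P')"
| pr_par: "par_red P P' \<Longrightarrow> par_red Q Q' \<Longrightarrow> par_red (Par P Q) (Par P' Q')"
| pr_pabs: "par_red P P' \<Longrightarrow> par_red (PAbs P) (PAbs P')"
| pr_papp: "par_red P P' \<Longrightarrow> par_red Q Q' \<Longrightarrow> par_red (PApp P Q) (PApp P' Q')"
| pr_nabs: "par_red P P' \<Longrightarrow> par_red (NAbs P) (NAbs P')"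
| pr_napp: "par_red P P' \<Longrightarrow> par_red (NApp P n) (NApp P' n)"
| pr_betaP: "par_red X X' \<Longrightarrow> par_red Q Q' \<Longrightarrow> par_red (PApp (PAbs X) Q) (substP 0 Q' X')"
| pr_betaN: "par_red X X' \<Longrightarrow> par_red (NApp (NAbs X) n) (substN 0 n X')"
| pr_nil_right: "par_red P P' \<Longrightarrow> par_red (Par P Nil) P'"
| pr_nil_left: "par_red P P' \<Longrightarrow> par_red (Par Nil P) P'"

abbreviation par_reds :: "trm \<Rightarrow> trm \<Rightarrow> bool" where
  "par_reds \<equiv> par_red\<^sup>*\<^sup>*"

lemma par_red_refl [simp, intro]: "par_red P P"
  by (induction P) (auto intro: par_red.intros)

lemma par_red_liftP: "par_red X X' \<Longrightarrow> par_red (liftP k X) (liftP k X')"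
proof (induction arbitrary: k rule: par_red.induct)
  case (pr_betaP X X' Q Q')
  then show ?case
    using par_red.pr_betaP[of "liftP (Suc k) X" "liftP (Suc k) X'" "liftP k Q" "liftP k Q'"]
    by (simp add: liftP_substP_ge)
qed (auto simp: substN_liftP [symmetric] intro: par_red.intros)

lemma par_red_liftN: "par_red X X' \<Longrightarrow> par_red (liftN k X) (liftN k X')"
proof (induction arbitrary: k rule: par_red.induct)
  case (pr_betaN X X' n)
  then show ?case
    using par_red.pr_betaN[of "liftN (Suc k) X" "liftN (Suc k) X'" "liftNm k n"]
    by (simp add: liftN_substN_ge)
qed (auto simp: liftN_substP intro: par_red.intros)

lemma par_red_substP:
  "par_red X X' \<Longrightarrow> par_red Q Q' \<Longrightarrow> par_red (substP k Q X) (substP k Q' X')"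
proof (induction arbitrary: k Q Q' rule: par_red.induct)
  case (pr_betaP X X' R R')
  then have "par_red (substP k Q (PApp (PAbs X) R))
      (substP 0 (substP k Q' R') (substP (Suc k) (liftP 0 Q') X'))"
    by (simp add: par_red.pr_betaP par_red_liftP)
  then show ?case by (simp add: substP_substP)
next
  case (pr_betaN X X' n)
  then have "par_red (substP k Q (NApp (NAbs X) n)) (substN 0 n (substP k (liftN 0 Q') X'))"
    by (simp add: par_red.pr_betaN par_red_liftN)
  then show ?case by (simp add: substP_substN)
qed (auto simp: par_red.intros par_red_liftP par_red_liftN)

lemma par_red_substN: "par_red X X' \<Longrightarrow> par_red (substN k n X) (substN k n X')"
proof (induction arbitrary: k n rule: par_red.induct)
  case (pr_betaP X X' R R')
  then show ?case by (auto simp: substN_substP intro!: par_red.intros)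
next
  case (pr_betaN X X' m)
  then have "par_red (substN k n (NApp (NAbs X) m))
      (substN 0 (substNm k n m) (substN (Suc k) (liftNm 0 n) X'))"
    by (auto intro!: par_red.intros)
  then show ?case by (simp add: substN_substN)
qed (auto intro!: par_red.intros)

inductive_cases par_red_NilE: "par_red Nil B"
inductive_cases par_red_PVE: "par_red (PV i) B"
inductive_cases par_red_InpE: "par_red (Inp m A) B"
inductive_cases par_red_OutE: "par_red (Out m A) B"
inductive_cases par_red_ParE: "par_red (Par A C) B"
inductive_cases par_red_PAbsE: "par_red (PAbs A) B"
inductive_cases par_red_PAppE: "par_red (PApp A C) B"
inductive_cases par_red_NAbsE: "par_red (NAbs A) B"
inductive_cases par_red_NAppE: "par_red (NApp A n) B"

lemma par_red_Par_cases:
  "par_red (Par A B) R \<Longrightarrow>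
    (\<exists>A' B'. R = Par A' B' \<and> par_red A A' \<and> par_red B B') \<or>
    (B = Nil \<and> par_red A R) \<or> (A = Nil \<and> par_red B R)"
  by (erule par_red_ParE) auto

lemma par_red_PApp_cases:
  "par_red (PApp X Y) R \<Longrightarrow>
    (\<exists>X' Y'. R = PApp X' Y' \<and> par_red X X' \<and> par_red Y Y') \<or>
    (\<exists>Z Z' Y'. X = PAbs Z \<and> R = substP 0 Y' Z' \<and> par_red Z Z' \<and> par_red Y Y')"
  by (erule par_red_PAppE) auto

lemma par_red_NApp_cases:
  "par_red (NApp X n) R \<Longrightarrow>
    (\<exists>X'. R = NApp X' n \<and> par_red X X') \<or>
    (\<exists>Z Z'. X = NAbs Z \<and> R = substN 0 n Z' \<and> par_red Z Z')"
  by (erule par_red_NAppE) auto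

fun develop :: "trm \<Rightarrow> trm" where
  "develop Nil = Nil"
| "develop (PV i) = PV i"
| "develop (Inp m P) = Inp m (develop P)"
| "develop (Out m P) = Out m (develop P)"
| "develop (Par P Q) =
    (if Q = Nil then develop P else if P = Nil then develop Q else Par (develop P) (develop Q))"
| "develop (PAbs P) = PAbs (develop P)"
| "develop (PApp P Q) =
    (case P of PAbs X \<Rightarrow> substP 0 (develop Q) (develop X) | _ \<Rightarrow> PApp (develop P) (develop Q))"
| "develop (NAbs P) = NAbs (develop P)"
| "develop (NApp P n) = (case P of NAbs X \<Rightarrow> substN 0 n (develop X) | _ \<Rightarrow> NApp (develop P) n)"

lemma par_red_develop: "par_red P Q \<Longrightarrow> par_red Q (develop P)"
proof (induction rule: par_red.induct)
  case (pr_par P P' Q Q')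
  then show ?case by (auto elim!: par_red_NilE intro: par_red.intros)
next
  case (pr_papp P P' Q Q')
  show ?case
  proof (cases "\<exists>X. P = PAbs X")
    case True
    then obtain X X' where "P = PAbs X" "P' = PAbs X'" "par_red X X'"
      using pr_papp.hyps(1) by (auto elim: par_red_PAbsE)
    then show ?thesis using pr_papp.IH by (auto elim: par_red_PAbsE intro: par_red.intros)
  next
    case False
    then show ?thesis using pr_papp.IH by (cases P) (auto intro: par_red.intros)
  qed
next
  case (pr_napp P P' n)
  show ?case
  proof (cases "\<exists>X. P = NAbs X")
    case True
    then obtain X X' where "P = NAbs X" "P' = NAbs X'" "par_red X X'"
      using pr_napp.hyps(1) by (auto elim: par_red_NAbsE)
    then show ?thesis using pr_napp.IH by (auto elim: par_red_NAbsE intro: par_red.intros)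
  next
    case False
    then show ?thesis using pr_napp.IH by (cases P) (auto intro: par_red.intros)
  qed
next
  case (pr_nil_left P P')
  then show ?case by (cases "P = Nil") auto
qed (auto intro: par_red.intros par_red_substP par_red_substN)

lemma confluentp_par_red: "confluentp par_red"
  by (intro strong_confluentp_imp_confluentp strong_confluentpI) (blast intro: par_red_develop)

lemma par_reds_confluent: "par_reds P Q \<Longrightarrow> par_reds P R \<Longrightarrow> \<exists>S. par_reds Q S \<and> par_reds R S"
  using confluentp_par_red by (rule confluentpD)

lemma par_reds_Par: "par_reds A A' \<Longrightarrow> par_reds B B' \<Longrightarrow> par_reds (Par A B) (Par A' B')"
  using rtranclp_map[of par_red par_red "\<lambda>x. Par x B"] rtranclp_map[of par_red par_red "Par A'"]
  by (meson par_red_refl pr_par rtranclp_trans)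

lemma par_reds_PApp: "par_reds A A' \<Longrightarrow> par_reds B B' \<Longrightarrow> par_reds (PApp A B) (PApp A' B')"
  using rtranclp_map[of par_red par_red "\<lambda>x. PApp x B"] rtranclp_map[of par_red par_red "PApp A'"]
  by (meson par_red_refl pr_papp rtranclp_trans)

lemma par_reds_congs:
  "par_reds A A' \<Longrightarrow> par_reds (Inp m A) (Inp m A')"
  "par_reds A A' \<Longrightarrow> par_reds (Out m A) (Out m A')"
  "par_reds A A' \<Longrightarrow> par_reds (PAbs A) (PAbs A')"
  "par_reds A A' \<Longrightarrow> par_reds (NAbs A) (NAbs A')"
  "par_reds A A' \<Longrightarrow> par_reds (NApp A n) (NApp A' n)"
  by (erule rtranclp_map[rotated], blast intro: par_red.intros)+

lemma par_reds_inv: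
  "par_reds (Inp m A) B \<Longrightarrow> \<exists>A'. B = Inp m A' \<and> par_reds A A'"
  "par_reds (Out m A) B \<Longrightarrow> \<exists>A'. B = Out m A' \<and> par_reds A A'"
  "par_reds (PAbs A) B \<Longrightarrow> \<exists>A'. B = PAbs A' \<and> par_reds A A'"
  "par_reds (NAbs A) B \<Longrightarrow> \<exists>A'. B = NAbs A' \<and> par_reds A A'"
  "par_reds (PApp (PV i) A) B \<Longrightarrow> \<exists>A'. B = PApp (PV i) A' \<and> par_reds A A'"
  by (erule rtranclp_image_inv[rotated];
      auto elim!: par_red_InpE par_red_OutE par_red_PAbsE par_red_NAbsE par_red_PAppE par_red_PVE)+

lemma par_reds_normal:
  "par_reds Nil B \<Longrightarrow> B = Nil"
  "par_reds (PV i) B \<Longrightarrow> B = PV i"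
  "par_reds (NApp (PV i) n) B \<Longrightarrow> B = NApp (PV i) n"
  by (induction rule: rtranclp_induct; auto elim!: par_red_NilE par_red_PVE par_red_NAppE)+

lemma par_reds_drop_Nil:
  "par_reds A Q \<Longrightarrow> par_reds B Nil \<Longrightarrow> par_reds (Par A B) Q"
  "par_reds A Nil \<Longrightarrow> par_reds B Q \<Longrightarrow> par_reds (Par A B) Q"
  by (meson par_reds_Par par_red_refl pr_nil_right pr_nil_left rtranclp.rtrancl_into_rtrancl)+


section \<open>AC-equivalence\<close>

text \<open>The unit law of \<open>Nil\<close> is left to parallel reduction: as an equivalence it would relate
  \<open>Par (PAbs X) Nil\<close> to \<open>PAbs X\<close>, so AC-equivalence would no longer reflect abstractions,
  on which its commutation with beta-contraction relies.\<close>
inductive ac_eq :: "trm \<Rightarrow> trm \<Rightarrow> bool" where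
  ac_nil: "ac_eq Nil Nil"
| ac_var: "ac_eq (PV i) (PV i)"
| ac_inp: "ac_eq P P' \<Longrightarrow> ac_eq (Inp m P) (Inp m P')"
| ac_out: "ac_eq P P' \<Longrightarrow> ac_eq (Out m P) (Out m P')"
| ac_par: "ac_eq P P' \<Longrightarrow> ac_eq Q Q' \<Longrightarrow> ac_eq (Par P Q) (Par P' Q')"
| ac_pabs: "ac_eq P P' \<Longrightarrow> ac_eq (PAbs P) (PAbs P')"
| ac_papp: "ac_eq P P' \<Longrightarrow> ac_eq Q Q' \<Longrightarrow> ac_eq (PApp P Q) (PApp P' Q')"
| ac_nabs: "ac_eq P P' \<Longrightarrow> ac_eq (NAbs P) (NAbs P')"
| ac_napp: "ac_eq P P' \<Longrightarrow> ac_eq (NApp P n) (NApp P' n)"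
| ac_assoc: "ac_eq A A' \<Longrightarrow> ac_eq B B' \<Longrightarrow> ac_eq C C' \<Longrightarrow>
    ac_eq (Par (Par A B) C) (Par A' (Par B' C'))"
| ac_assoc': "ac_eq A A' \<Longrightarrow> ac_eq B B' \<Longrightarrow> ac_eq C C' \<Longrightarrow>
    ac_eq (Par A (Par B C)) (Par (Par A' B') C')"
| ac_comm: "ac_eq A A' \<Longrightarrow> ac_eq B B' \<Longrightarrow> ac_eq (Par A B) (Par B' A')"

abbreviation ac_conv :: "trm \<Rightarrow> trm \<Rightarrow> bool" where
  "ac_conv \<equiv> ac_eq\<^sup>*\<^sup>*"

lemma ac_eq_refl [simp, intro]: "ac_eq P P"
  by (induction P) (auto intro: ac_eq.intros)

lemma ac_eq_sym: "ac_eq P Q \<Longrightarrow> ac_eq Q P"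
  by (induction rule: ac_eq.induct) (auto intro: ac_eq.intros)

lemma ac_conv_sym: "ac_conv P Q \<Longrightarrow> ac_conv Q P"
  by (metis ac_eq_sym sympD sympI symp_rtranclp)

lemma ac_eq_liftP: "ac_eq X X' \<Longrightarrow> ac_eq (liftP k X) (liftP k X')"
  by (induction arbitrary: k rule: ac_eq.induct) (auto intro: ac_eq.intros)

lemma ac_eq_liftN: "ac_eq X X' \<Longrightarrow> ac_eq (liftN k X) (liftN k X')"
  by (induction arbitrary: k rule: ac_eq.induct) (auto intro: ac_eq.intros)

lemma ac_eq_substN: "ac_eq X X' \<Longrightarrow> ac_eq (substN k n X) (substN k n X')"
  by (induction arbitrary: k n rule: ac_eq.induct) (auto intro: ac_eq.intros)

lemma ac_eq_substP: "ac_eq X X' \<Longrightarrow> ac_eq Q Q' \<Longrightarrow> ac_eq (substP k Q X) (substP k Q' X')"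
  by (induction arbitrary: k Q Q' rule: ac_eq.induct)
    (auto simp: ac_eq.intros ac_eq_liftP ac_eq_liftN)

inductive_cases ac_eq_NilE: "ac_eq Nil B"
inductive_cases ac_eq_PVE: "ac_eq (PV i) B"
inductive_cases ac_eq_InpE: "ac_eq (Inp m A) B"
inductive_cases ac_eq_OutE: "ac_eq (Out m A) B"
inductive_cases ac_eq_ParE: "ac_eq (Par A C) B"
inductive_cases ac_eq_PAbsE: "ac_eq (PAbs A) B"
inductive_cases ac_eq_PAppE: "ac_eq (PApp A C) B"
inductive_cases ac_eq_NAbsE: "ac_eq (NAbs A) B"
inductive_cases ac_eq_NAppE: "ac_eq (NApp A n) B"
inductive_cases ac_eq_Nil_rightE: "ac_eq B Nil"
inductive_cases ac_eq_PAbs_rightE: "ac_eq B (PAbs A)"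
inductive_cases ac_eq_NAbs_rightE: "ac_eq B (NAbs A)"

lemma ac_eq_Par_cases:
  "ac_eq (Par P1 P2) R \<Longrightarrow>
    (\<exists>A B. R = Par A B \<and> ac_eq P1 A \<and> ac_eq P2 B) \<or>
    (\<exists>A A' B B' C'. P1 = Par A B \<and> R = Par A' (Par B' C') \<and> ac_eq A A' \<and> ac_eq B B' \<and> ac_eq P2 C') \<or>
    (\<exists>A' B C B' C'. P2 = Par B C \<and> R = Par (Par A' B') C' \<and> ac_eq P1 A' \<and> ac_eq B B' \<and> ac_eq C C') \<or>
    (\<exists>A' B'. R = Par B' A' \<and> ac_eq P1 A' \<and> ac_eq P2 B')"
  by (erule ac_eq_ParE) blast+

definition ac_simulates :: "trm \<Rightarrow> trm \<Rightarrow> bool" where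
  "ac_simulates P P' \<longleftrightarrow> (\<forall>R. par_red P' R \<longrightarrow> (\<exists>Q. par_reds P Q \<and> ac_eq Q R))"

lemma ac_simulatesD: "ac_simulates P P' \<Longrightarrow> par_red P' R \<Longrightarrow> \<exists>Q. par_reds P Q \<and> ac_eq Q R"
  unfolding ac_simulates_def by blast

lemma ac_simulates_Nil_reds: "ac_simulates P Nil \<Longrightarrow> par_reds P Nil"
  by (blast dest: ac_simulatesD[OF _ pr_nil] elim: ac_eq_Nil_rightE)

lemma ac_simulates_leaves: "ac_simulates Nil Nil" "ac_simulates (PV i) (PV i)"
  unfolding ac_simulates_def by (blast elim: par_red_NilE par_red_PVE)+

lemma ac_simulates_binders:
  assumes "ac_simulates A A'"
  shows "ac_simulates (Inp m A) (Inp m A')" "ac_simulates (Out m A) (Out m A')"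
    "ac_simulates (PAbs A) (PAbs A')" "ac_simulates (NAbs A) (NAbs A')"
  using assms unfolding ac_simulates_def
  by (safe elim!: par_red_InpE par_red_OutE par_red_PAbsE par_red_NAbsE;
      meson par_reds_congs ac_eq.intros)+

lemma ac_simulates_PApp:
  assumes sX: "ac_simulates X X'" and sY: "ac_simulates Y Y'"
  shows "ac_simulates (PApp X Y) (PApp X' Y')"
  unfolding ac_simulates_def
proof (intro allI impI)
  fix R assume "par_red (PApp X' Y') R"
  from par_red_PApp_cases[OF this] show "\<exists>Q. par_reds (PApp X Y) Q \<and> ac_eq Q R"
  proof (elim disjE exE conjE)
    fix X'' Y'' assume "R = PApp X'' Y''" "par_red X' X''" "par_red Y' Y''"
    then show ?thesis using sX sY by (meson ac_simulatesD ac_papp par_reds_PApp)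
  next
    fix Z Z' Y'' assume "X' = PAbs Z" and R: "R = substP 0 Y'' Z'"
      and "par_red Z Z'" "par_red Y' Y''"
    then obtain Zq Yq where "par_reds X (PAbs Zq)" "ac_eq Zq Z'" "par_reds Y Yq" "ac_eq Yq Y''"
      using sX sY by (blast dest: ac_simulatesD intro: pr_pabs elim: ac_eq_PAbs_rightE)
    then have "par_reds (PApp X Y) (substP 0 Yq Zq)" "ac_eq (substP 0 Yq Zq) R"
      using R by (auto intro: par_reds_PApp pr_betaP rtranclp.rtrancl_into_rtrancl ac_eq_substP)
    then show ?thesis by blast
  qed
qed

lemma ac_simulates_NApp:
  assumes sX: "ac_simulates X X'"
  shows "ac_simulates (NApp X n) (NApp X' n)"
  unfolding ac_simulates_def
proof (intro allI impI)
  fix R assume "par_red (NApp X' n) R"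
  from par_red_NApp_cases[OF this] show "\<exists>Q. par_reds (NApp X n) Q \<and> ac_eq Q R"
  proof (elim disjE exE conjE)
    fix X'' assume "R = NApp X'' n" "par_red X' X''"
    then show ?thesis using sX by (meson ac_simulatesD ac_napp par_reds_congs(5))
  next
    fix Z Z' assume "X' = NAbs Z" and R: "R = substN 0 n Z'" and "par_red Z Z'"
    then obtain Zq where "par_reds X (NAbs Zq)" "ac_eq Zq Z'"
      using sX by (blast dest: ac_simulatesD intro: pr_nabs elim: ac_eq_NAbs_rightE)
    then have "par_reds (NApp X n) (substN 0 n Zq)" "ac_eq (substN 0 n Zq) R"
      using R
      by (auto intro: par_reds_congs(5) pr_betaN rtranclp.rtrancl_into_rtrancl ac_eq_substN)
    then show ?thesis by blast
  qed
qed

lemma ac_simulates_Par: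
  assumes sA: "ac_simulates A A'" and sB: "ac_simulates B B'"
  shows "ac_simulates (Par A B) (Par A' B')"
  unfolding ac_simulates_def
proof (intro allI impI)
  fix R assume "par_red (Par A' B') R"
  from par_red_Par_cases[OF this] show "\<exists>Q. par_reds (Par A B) Q \<and> ac_eq Q R"
  proof (elim disjE exE conjE)
    fix A'' B'' assume "R = Par A'' B''" "par_red A' A''" "par_red B' B''"
    then show ?thesis using sA sB by (meson ac_simulatesD ac_par par_reds_Par)
  next
    assume "B' = Nil" "par_red A' R"
    then show ?thesis using sA sB by (meson ac_simulatesD ac_simulates_Nil_reds par_reds_drop_Nil)
  next
    assume "A' = Nil" "par_red B' R"
    then show ?thesis using sA sB by (meson ac_simulatesD ac_simulates_Nil_reds par_reds_drop_Nil)
  qed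
qed

lemma ac_simulates_comm:
  assumes sA: "ac_simulates A A'" and sB: "ac_simulates B B'"
  shows "ac_simulates (Par A B) (Par B' A')"
  unfolding ac_simulates_def
proof (intro allI impI)
  fix R assume "par_red (Par B' A') R"
  from par_red_Par_cases[OF this] show "\<exists>Q. par_reds (Par A B) Q \<and> ac_eq Q R"
  proof (elim disjE exE conjE)
    fix B'' A'' assume "R = Par B'' A''" "par_red B' B''" "par_red A' A''"
    then show ?thesis using sA sB by (meson ac_simulatesD ac_comm par_reds_Par)
  next
    assume "A' = Nil" "par_red B' R"
    then show ?thesis using sA sB by (meson ac_simulatesD ac_simulates_Nil_reds par_reds_drop_Nil)
  next
    assume "B' = Nil" "par_red A' R"
    then show ?thesis using sA sB by (meson ac_simulatesD ac_simulates_Nil_reds par_reds_drop_Nil)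
  qed
qed

lemma ac_simulates_assoc:
  assumes sA: "ac_simulates A A'" and sB: "ac_simulates B B'" and sC: "ac_simulates C C'"
  shows "ac_simulates (Par (Par A B) C) (Par A' (Par B' C'))"
  unfolding ac_simulates_def
proof (intro allI impI)
  fix R assume "par_red (Par A' (Par B' C')) R"
  from par_red_Par_cases[OF this] show "\<exists>Q. par_reds (Par (Par A B) C) Q \<and> ac_eq Q R"
  proof (elim disjE exE conjE)
    fix A'' W assume R: "R = Par A'' W" and "par_red A' A''" and W: "par_red (Par B' C') W"
    then obtain QA where QA: "par_reds A QA" "ac_eq QA A''" using sA by (blast dest: ac_simulatesD)
    from par_red_Par_cases[OF W] show ?thesis
    proof (elim disjE exE conjE)
      fix B'' C'' assume "W = Par B'' C''" "par_red B' B''" "par_red C' C''"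
      then show ?thesis using sB sC QA R by (meson ac_simulatesD ac_assoc par_reds_Par)
    next
      assume "C' = Nil" "par_red B' W"
      then show ?thesis using sB sC QA R
        by (meson ac_simulatesD ac_simulates_Nil_reds ac_par par_reds_Par par_reds_drop_Nil)
    next
      assume "B' = Nil" "par_red C' W"
      then show ?thesis using sB sC QA R
        by (meson ac_simulatesD ac_simulates_Nil_reds ac_par par_reds_Par par_reds_drop_Nil)
    qed
  next
    assume "A' = Nil" "par_red (Par B' C') R"
    then show ?thesis using sA ac_simulates_Par[OF sB sC]
      by (meson ac_simulatesD ac_simulates_Nil_reds par_reds_Par par_reds_drop_Nil
          rtranclp.rtrancl_refl rtranclp_trans)
  qed simp
qed

lemma ac_simulates_assoc':
  assumes sA: "ac_simulates A A'" and sB: "ac_simulates B B'" and sC: "ac_simulates C C'"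
  shows "ac_simulates (Par A (Par B C)) (Par (Par A' B') C')"
  unfolding ac_simulates_def
proof (intro allI impI)
  fix R assume "par_red (Par (Par A' B') C') R"
  from par_red_Par_cases[OF this] show "\<exists>Q. par_reds (Par A (Par B C)) Q \<and> ac_eq Q R"
  proof (elim disjE exE conjE)
    fix W C'' assume R: "R = Par W C''" and W: "par_red (Par A' B') W" and "par_red C' C''"
    then obtain QC where QC: "par_reds C QC" "ac_eq QC C''" using sC by (blast dest: ac_simulatesD)
    from par_red_Par_cases[OF W] show ?thesis
    proof (elim disjE exE conjE)
      fix A'' B'' assume "W = Par A'' B''" "par_red A' A''" "par_red B' B''"
      then show ?thesis using sA sB QC R by (meson ac_simulatesD ac_assoc' par_reds_Par)
    next
      assume "B' = Nil" "par_red A' W"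
      then show ?thesis using sA sB QC R
        by (meson ac_simulatesD ac_simulates_Nil_reds ac_par par_reds_Par par_reds_drop_Nil)
    next
      assume "A' = Nil" "par_red B' W"
      then show ?thesis using sA sB QC R
        by (meson ac_simulatesD ac_simulates_Nil_reds ac_par par_reds_Par par_reds_drop_Nil)
    qed
  next
    assume "C' = Nil" "par_red (Par A' B') R"
    then show ?thesis using sC ac_simulates_Par[OF sA sB]
      by (meson ac_simulatesD ac_simulates_Nil_reds par_reds_Par par_reds_drop_Nil
          rtranclp.rtrancl_refl rtranclp_trans)
  qed simp
qed

lemma ac_eq_simulates: "ac_eq P P' \<Longrightarrow> ac_simulates P P'"
  by (induction rule: ac_eq.induct)
    (auto intro: ac_simulates_leaves ac_simulates_binders ac_simulates_Par ac_simulates_PApp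
      ac_simulates_NApp ac_simulates_assoc ac_simulates_assoc' ac_simulates_comm)

lemma ac_conv_par_reds_commute:
  "ac_conv P P' \<Longrightarrow> par_reds P' R \<Longrightarrow> \<exists>Q. par_reds P Q \<and> ac_conv Q R"
  by (rule rtranclp_commute) (blast dest: ac_eq_simulates ac_simulatesD)

definition ac_joinable :: "trm \<Rightarrow> trm \<Rightarrow> bool" where
  "ac_joinable P Q \<longleftrightarrow> (\<exists>P' Q'. par_reds P P' \<and> par_reds Q Q' \<and> ac_conv P' Q')"

lemma ac_joinable_sym: "ac_joinable P Q \<Longrightarrow> ac_joinable Q P"
  unfolding ac_joinable_def using ac_conv_sym by blast

lemma ac_joinable_trans: "ac_joinable P Q \<Longrightarrow> ac_joinable Q R \<Longrightarrow> ac_joinable P R"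
proof -
  assume "ac_joinable P Q" "ac_joinable Q R"
  then obtain P1 Q1 Q2 R2 where
    "par_reds P P1" "par_reds Q Q1" "ac_conv P1 Q1" "par_reds Q Q2" "par_reds R R2" "ac_conv R2 Q2"
    unfolding ac_joinable_def using ac_conv_sym by blast
  moreover obtain S where "par_reds Q1 S" "par_reds Q2 S"
    using par_reds_confluent \<open>par_reds Q Q1\<close> \<open>par_reds Q Q2\<close> by blast
  ultimately obtain P3 R3 where "par_reds P1 P3" "ac_conv P3 S" "par_reds R2 R3" "ac_conv R3 S"
    using ac_conv_par_reds_commute by meson
  then show "ac_joinable P R"
    unfolding ac_joinable_def using \<open>par_reds P P1\<close> \<open>par_reds R R2\<close>
    by (meson ac_conv_sym rtranclp_trans)
qed

lemma ac_joinable_cong1: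
  assumes "ac_joinable A A'"
    and "\<And>x y. ac_eq x y \<Longrightarrow> ac_eq (f x) (f y)" and "\<And>x y. par_red x y \<Longrightarrow> par_red (f x) (f y)"
  shows "ac_joinable (f A) (f A')"
proof -
  obtain A1 A2 where "par_reds A A1" "par_reds A' A2" "ac_conv A1 A2"
    using assms(1) unfolding ac_joinable_def by blast
  then have "par_reds (f A) (f A1)" "par_reds (f A') (f A2)" "ac_conv (f A1) (f A2)"
    using rtranclp_map[of par_red par_red f] rtranclp_map[of ac_eq ac_eq f] assms(2,3) by auto
  then show ?thesis unfolding ac_joinable_def by blast
qed

lemma ac_joinable_cong2:
  assumes "ac_joinable A A'" "ac_joinable B B'"
    and "\<And>x y u v. ac_eq x y \<Longrightarrow> ac_eq u v \<Longrightarrow> ac_eq (f x u) (f y v)"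
    and "\<And>x y u v. par_red x y \<Longrightarrow> par_red u v \<Longrightarrow> par_red (f x u) (f y v)"
  shows "ac_joinable (f A B) (f A' B')"
proof -
  have "ac_joinable (f A B) (f A' B)"
    using assms(1) by (rule ac_joinable_cong1) (auto intro: assms(3,4))
  moreover have "ac_joinable (f A' B) (f A' B')"
    using assms(2) by (rule ac_joinable_cong1) (auto intro: assms(3,4))
  ultimately show ?thesis by (rule ac_joinable_trans)
qed

lemma scong_ac_joinable: "P \<equiv>s Q \<Longrightarrow> ac_joinable P Q"
proof (induction rule: scong.induct)
  case (sc_refl P) then show ?case unfolding ac_joinable_def by blast
next
  case (sc_sym P Q) then show ?case by (blast intro: ac_joinable_sym)
next
  case (sc_trans P Q R) then show ?case by (blast intro: ac_joinable_trans)
next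
  case (sc_inp P P' m)
  show ?case by (rule ac_joinable_cong1[OF sc_inp.IH]) (auto intro: ac_inp pr_inp)
next
  case (sc_out P P' m)
  show ?case by (rule ac_joinable_cong1[OF sc_out.IH]) (auto intro: ac_out pr_out)
next
  case (sc_par P P' Q Q')
  show ?case by (rule ac_joinable_cong2[OF sc_par.IH]) (auto intro: ac_par pr_par)
next
  case (sc_pabs P P')
  show ?case by (rule ac_joinable_cong1[OF sc_pabs.IH]) (auto intro: ac_pabs pr_pabs)
next
  case (sc_papp P P' Q Q')
  show ?case by (rule ac_joinable_cong2[OF sc_papp.IH]) (auto intro: ac_papp pr_papp)
next
  case (sc_nabs P P')
  show ?case by (rule ac_joinable_cong1[OF sc_nabs.IH]) (auto intro: ac_nabs pr_nabs)
next
  case (sc_napp P P' n)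
  show ?case by (rule ac_joinable_cong1[OF sc_napp.IH]) (auto intro: ac_napp pr_napp)
next
  case (sc_assoc P Q R) then show ?case unfolding ac_joinable_def by (blast intro: ac_assoc)
next
  case (sc_comm P Q) then show ?case unfolding ac_joinable_def by (blast intro: ac_comm)
next
  case (sc_nil P) then show ?case unfolding ac_joinable_def by (blast intro: pr_nil_right)
next
  case (sc_betaP P Q) then show ?case unfolding ac_joinable_def by (blast intro: pr_betaP)
next
  case (sc_betaN P n) then show ?case unfolding ac_joinable_def by (blast intro: pr_betaN)
qed


lemma dep_SucI:
  "dep P k \<Longrightarrow> dep (Inp m P) (Suc k)" "dep P k \<Longrightarrow> dep (Out m P) (Suc k)"
  "dep P k \<Longrightarrow> dep (PAbs P) (Suc k)" "dep P k \<Longrightarrow> dep (NAbs P) (Suc k)"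
  "dep P k \<Longrightarrow> dep (PApp (PV i) P) (Suc k)"
  "dep (PV i) (Suc 0)" "dep (NApp (PV i) n) (Suc 0)"
  using dep.intros by auto

lemma dep_Par_iff: "dep (Par A B) k \<longleftrightarrow> (\<exists>a b. dep A a \<and> dep B b \<and> k = a + b)"
  by (blast elim: dep_ParE intro: d_par)

lemma dep_par_red: "dep P k \<Longrightarrow> par_red P P' \<Longrightarrow> dep P' k"
proof (induction arbitrary: P' rule: dep.induct)
  case (d_par P1 k1 P2 k2)
  from par_red_Par_cases[OF d_par.prems] show ?case
  proof (elim disjE exE conjE)
    fix A B assume "P' = Par A B" "par_red P1 A" "par_red P2 B"
    then show ?thesis using d_par.IH by (auto intro: dep.intros)
  next
    assume "P2 = Nil" "par_red P1 P'"
    then show ?thesis using d_par.hyps(2) d_par.IH(1) by (auto elim: dep_NilE)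
  next
    assume "P1 = Nil" "par_red P2 P'"
    then show ?thesis using d_par.hyps(1) d_par.IH(2) by (auto elim: dep_NilE)
  qed
next
  case (d_vapp P k i)
  from par_red_PApp_cases[OF d_vapp.prems] show ?case
    using d_vapp.IH by (auto elim: par_red_PVE intro: dep_SucI)
next
  case (d_betaP P2 P3 k)
  from par_red_PApp_cases[OF d_betaP.prems] show ?case
  proof (elim disjE exE conjE)
    fix X Y assume P': "P' = PApp X Y" and "par_red (PAbs P3) X" "par_red P2 Y"
    then obtain P3' where "X = PAbs P3'" "par_red (substP 0 P2 P3) (substP 0 Y P3')"
      by (auto elim: par_red_PAbsE intro: par_red_substP)
    then show ?thesis using d_betaP.IH P' by (auto intro: dep.d_betaP)
  next
    fix Z Z' Y assume "PAbs P3 = PAbs Z" "P' = substP 0 Y Z'" "par_red Z Z'" "par_red P2 Y"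
    then show ?thesis using d_betaP.IH by (simp add: par_red_substP)
  qed
next
  case (d_betaN n P3 k)
  from par_red_NApp_cases[OF d_betaN.prems] show ?case
  proof (elim disjE exE conjE)
    fix X assume P': "P' = NApp X n" and "par_red (NAbs P3) X"
    then obtain P3' where "X = NAbs P3'" "par_red (substN 0 n P3) (substN 0 n P3')"
      by (auto elim: par_red_NAbsE intro: par_red_substN)
    then show ?thesis using d_betaN.IH P' by (auto intro: dep.d_betaN)
  next
    fix Z Z' assume "NAbs P3 = NAbs Z" "P' = substN 0 n Z'" "par_red Z Z'"
    then show ?thesis using d_betaN.IH by (simp add: par_red_substN)
  qed
qed (auto elim!: par_red_NilE par_red_PVE par_red_InpE par_red_OutE par_red_PAbsE par_red_NAbsE
      par_red_NAppE intro: dep.intros dep_SucI)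

lemma dep_par_reds: "par_reds P P' \<Longrightarrow> dep P k \<Longrightarrow> dep P' k"
  by (induction rule: rtranclp_induct) (auto intro: dep_par_red)

lemma dep_ac_eq: "dep P k \<Longrightarrow> ac_eq P P' \<Longrightarrow> dep P' k"
proof (induction arbitrary: P' rule: dep.induct)
  case (d_par P1 k1 P2 k2)
  from ac_eq_Par_cases[OF d_par.prems] show ?case
  proof (elim disjE exE conjE)
    fix A B assume "P' = Par A B" "ac_eq P1 A" "ac_eq P2 B"
    then show ?thesis using d_par.IH by (auto intro: dep.d_par)
  next
    fix A A' B B' C' assume P1: "P1 = Par A B" and P': "P' = Par A' (Par B' C')"
      and "ac_eq A A'" "ac_eq B B'" "ac_eq P2 C'"
    then have "dep (Par A' B') k1" "dep C' k2" using d_par.IH by (auto intro: ac_eq.intros)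
    then show ?thesis using P' by (auto simp: dep_Par_iff) (metis add.assoc)
  next
    fix A' B C B' C' assume P2: "P2 = Par B C" and P': "P' = Par (Par A' B') C'"
      and "ac_eq P1 A'" "ac_eq B B'" "ac_eq C C'"
    then have "dep A' k1" "dep (Par B' C') k2" using d_par.IH by (auto intro: ac_eq.intros)
    then show ?thesis using P' by (auto simp: dep_Par_iff) (metis add.assoc)
  next
    fix A' B' assume "P' = Par B' A'" "ac_eq P1 A'" "ac_eq P2 B'"
    then show ?thesis using d_par.IH dep.d_par[of B' k2 A' k1] by (simp add: add.commute)
  qed
next
  case (d_betaP P2 P3 k)
  then show ?case by (auto elim!: ac_eq_PAppE ac_eq_PAbsE intro: dep.intros ac_eq_substP)
next
  case (d_betaN n P3 k)
  then show ?case by (auto elim!: ac_eq_NAppE ac_eq_NAbsE intro: dep.intros ac_eq_substN)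
qed (auto elim!: ac_eq_NilE ac_eq_PVE ac_eq_InpE ac_eq_OutE ac_eq_PAbsE ac_eq_NAbsE ac_eq_PAppE
      ac_eq_NAppE intro: dep.intros dep_SucI)

lemma dep_ac_conv: "ac_conv P P' \<Longrightarrow> dep P k \<Longrightarrow> dep P' k"
  by (induction rule: rtranclp_induct) (auto intro: dep_ac_eq)

lemma dep_liftP: "dep X a \<Longrightarrow> dep (liftP k X) a"
proof (induction arbitrary: k rule: dep.induct)
  case (d_betaP P2 P3 j)
  then show ?case by (simp add: liftP_substP_ge[of 0 k, simplified, symmetric] dep.d_betaP)
next
  case (d_betaN n P3 j)
  then show ?case by (simp add: substN_liftP [symmetric] dep.d_betaN)
qed (auto intro: dep.intros dep_SucI)

text \<open>Unlike \<open>dep\<close>, the depth of a reduct is invariant under structural congruence, whose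
  beta-laws may also be used to expand a term.\<close>
definition red_depth :: "trm \<Rightarrow> nat \<Rightarrow> bool" where
  "red_depth M k \<longleftrightarrow> (\<exists>M'. par_reds M M' \<and> dep M' k)"

lemma red_depth_dep: "dep M k \<Longrightarrow> red_depth M k"
  unfolding red_depth_def by blast

lemma red_depth_unique: "red_depth M k \<Longrightarrow> red_depth M k' \<Longrightarrow> k = k'"
  unfolding red_depth_def by (meson dep_unique dep_par_reds par_reds_confluent)

lemma red_depth_par_reds: "par_reds M M' \<Longrightarrow> red_depth M' k \<Longrightarrow> red_depth M k"
  unfolding red_depth_def by (meson rtranclp_trans)

lemma red_depth_ac_joinable: "ac_joinable M N \<Longrightarrow> red_depth M k \<Longrightarrow> red_depth N k"
proof -
  assume "ac_joinable M N" "red_depth M k"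
  then obtain M1 M2 N2
    where "par_reds M M1" "dep M1 k" "par_reds M M2" "par_reds N N2" "ac_conv N2 M2"
    unfolding ac_joinable_def red_depth_def using ac_conv_sym by blast
  moreover obtain S where "par_reds M1 S" "par_reds M2 S"
    using par_reds_confluent \<open>par_reds M M1\<close> \<open>par_reds M M2\<close> by blast
  ultimately obtain N3 where "par_reds N N3" "ac_conv N3 S" "dep S k"
    using ac_conv_par_reds_commute dep_par_reds by (meson rtranclp_trans)
  then show "red_depth N k" unfolding red_depth_def by (meson ac_conv_sym dep_ac_conv)
qed

lemma red_depth_scong: "P \<equiv>s Q \<Longrightarrow> red_depth P k \<Longrightarrow> red_depth Q k"
  using red_depth_ac_joinable scong_ac_joinable by blast

lemma red_depth_leaves:
  "red_depth Nil k \<longleftrightarrow> k = 0"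
  "red_depth (PV i) k \<longleftrightarrow> k = 1"
  "red_depth (NApp (PV i) n) k \<longleftrightarrow> k = 1"
  unfolding red_depth_def
  by (auto dest: par_reds_normal elim: dep_NilE dep_PVE dep_NAppE intro: dep.intros dep_SucI)

lemma red_depth_Suc_iff:
  "red_depth (Inp m A) k \<longleftrightarrow> (\<exists>a. red_depth A a \<and> k = Suc a)"
  "red_depth (Out m A) k \<longleftrightarrow> (\<exists>a. red_depth A a \<and> k = Suc a)"
  "red_depth (PAbs A) k \<longleftrightarrow> (\<exists>a. red_depth A a \<and> k = Suc a)"
  "red_depth (NAbs A) k \<longleftrightarrow> (\<exists>a. red_depth A a \<and> k = Suc a)"
  "red_depth (PApp (PV i) A) k \<longleftrightarrow> (\<exists>a. red_depth A a \<and> k = Suc a)"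
  unfolding red_depth_def
  by (auto dest!: par_reds_inv elim!: dep_InpE dep_OutE dep_PAbsE dep_NAbsE dep_PAppE
      intro: par_reds_congs par_reds_PApp dep_SucI)

lemma red_depth_Par_iff:
  "red_depth (Par A B) k \<longleftrightarrow> (\<exists>a b. red_depth A a \<and> red_depth B b \<and> k = a + b)"
proof
  assume "red_depth (Par A B) k"
  then obtain M where "par_reds (Par A B) M" "dep M k" unfolding red_depth_def by blast
  then show "\<exists>a b. red_depth A a \<and> red_depth B b \<and> k = a + b"
  proof (induction "Par A B" arbitrary: A B rule: converse_rtranclp_induct)
    case base
    then show ?case by (auto simp: dep_Par_iff intro: red_depth_dep)
  next
    case (step Z)
    from par_red_Par_cases[OF step.hyps(1)] show ?case
    proof (elim disjE exE conjE)
      fix A' B' assume "Z = Par A' B'" "par_red A A'" "par_red B B'"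
      then show ?thesis using step.hyps(3) step.prems red_depth_par_reds by blast
    next
      assume "B = Nil" "par_red A Z"
      then have "red_depth A k" "red_depth B 0"
        using step.hyps(2) step.prems unfolding red_depth_def
        by (auto intro: d_nil converse_rtranclp_into_rtranclp)
      then show ?thesis by force
    next
      assume "A = Nil" "par_red B Z"
      then have "red_depth A 0" "red_depth B k"
        using step.hyps(2) step.prems unfolding red_depth_def
        by (auto intro: d_nil converse_rtranclp_into_rtranclp)
      then show ?thesis by force
    qed
  qed
next
  assume "\<exists>a b. red_depth A a \<and> red_depth B b \<and> k = a + b"
  then show "red_depth (Par A B) k" unfolding red_depth_def by (auto intro: par_reds_Par d_par)
qed

lemma red_depth_liftP: "red_depth X a \<Longrightarrow> red_depth (liftP k X) a"
  unfolding red_depth_def using rtranclp_map[of par_red par_red "liftP k"]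
  by (meson dep_liftP par_red_liftP)

lemma red_depth_trans:
  "trans P l P' \<Longrightarrow> red_depth P k \<Longrightarrow>
    (case l of
      LIn m \<Rightarrow> \<exists>k'. k = Suc k' \<and> red_depth P' k'
    | LOut m B \<Rightarrow> \<exists>b q. red_depth B b \<and> red_depth P' q \<and> k = Suc (b + q)
    | LTau \<Rightarrow> True)"
proof (induction arbitrary: k rule: trans.induct)
  case (tr_parl_in P m P' Q)
  then show ?case by (fastforce simp: red_depth_Par_iff intro: red_depth_liftP)
next
  case (tr_parr_in Q m Q' P)
  then show ?case by (fastforce simp: red_depth_Par_iff intro: red_depth_liftP)
next
  case (tr_parl_out P m A P' Q)
  then obtain a b where "red_depth P a" "red_depth Q b" "k = a + b"
    by (auto simp: red_depth_Par_iff)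
  with tr_parl_out.IH show ?case by (fastforce simp: red_depth_Par_iff)
next
  case (tr_parr_out Q m A Q' P)
  then obtain a b where "red_depth P a" "red_depth Q b" "k = a + b"
    by (auto simp: red_depth_Par_iff)
  with tr_parr_out.IH show ?case by (fastforce simp: red_depth_Par_iff)
next
  case (tr_cong P P1 l P1' P')
  then have "red_depth P1 k" using red_depth_scong by blast
  moreover have "red_depth P1' j \<Longrightarrow> red_depth P' j" for j
    using red_depth_scong tr_cong.hyps(3) by blast
  ultimately show ?case using tr_cong.IH by (cases l) (fastforce+)
qed (auto simp: red_depth_Suc_iff red_depth_leaves)


section \<open>Depth and bisimulation\<close>

text \<open>Prefixes and variable-headed terms, with their depth: the parallel components observed by
  clauses (4)-(8) of a HO-IO bisimulation.\<close>
inductive component :: "(nat \<Rightarrow> ty) \<Rightarrow> trm \<Rightarrow> nat \<Rightarrow> bool" for G where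
  comp_inp: "typed (ext_ctx s G) A Pr \<Longrightarrow> dep A a \<Longrightarrow> component G (Inp m A) (Suc a)"
| comp_out: "typed G A s \<Longrightarrow> dep A a \<Longrightarrow> component G (Out m A) (Suc a)"
| comp_var: "component G (PV i) 1"
| comp_vapp: "typed G A s \<Longrightarrow> dep A a \<Longrightarrow> component G (PApp (PV i) A) (Suc a)"
| comp_vnapp: "component G (NApp (PV i) n) 1"

definition decomposes :: "(nat \<Rightarrow> ty) \<Rightarrow> trm \<Rightarrow> nat \<Rightarrow> bool" where
  "decomposes G P n \<longleftrightarrow> (n = 0 \<and> P \<equiv>s Nil) \<or>
    (\<exists>C c Rs r. component G C c \<and> typed G Rs Pr \<and> dep Rs r \<and> P \<equiv>s Par C Rs \<and> n = c + r)"

lemma decomposes_scong: "P \<equiv>s P' \<Longrightarrow> decomposes G P' n \<Longrightarrow> decomposes G P n"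
  unfolding decomposes_def by (blast intro: sc_trans)

lemma decomposes_component: "component G C c \<Longrightarrow> decomposes G C c"
  unfolding decomposes_def by (metis add_0_right d_nil sc_nil sc_sym t_nil)

lemma decomposes_process: "dep P n \<Longrightarrow> typed G P Pr \<Longrightarrow> decomposes G P n"
proof (induction arbitrary: G rule: dep.induct)
  case d_nil
  then show ?case unfolding decomposes_def by (blast intro: sc_refl)
next
  case (d_par P1 k1 P2 k2)
  then have t2: "typed G P2 Pr" and "decomposes G P1 k1" by (auto elim: typed_ParE)
  then consider "k1 = 0" "P1 \<equiv>s Nil"
    | C c Rs r where "component G C c" "typed G Rs Pr" "dep Rs r" "P1 \<equiv>s Par C Rs" "k1 = c + r"
    unfolding decomposes_def by blast
  then show ?case
  proof cases
    case 1
    then have "Par P1 P2 \<equiv>s P2" by (meson sc_comm sc_nil sc_par sc_refl sc_trans)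
    then show ?thesis using 1 d_par.IH(2) t2 by (simp add: decomposes_scong)
  next
    case (2 C c Rs r)
    then have "Par P1 P2 \<equiv>s Par C (Par Rs P2)" by (meson sc_assoc sc_par sc_refl sc_trans)
    moreover have "typed G (Par Rs P2) Pr" "dep (Par Rs P2) (r + k2)"
      using 2 t2 d_par.hyps(2) by (auto intro: t_par dep.d_par)
    ultimately show ?thesis using 2 unfolding decomposes_def by force
  qed
next
  case (d_betaP P2 P3 k)
  then show ?case by (meson decomposes_scong sc_betaP typed_betaP)
next
  case (d_betaN n P3 k)
  then show ?case by (meson decomposes_scong sc_betaN typed_betaN)
next
  case (d_var i)
  then show ?case by (blast intro: decomposes_component comp_var)
next
  case (d_vnapp i n)
  then show ?case by (blast intro: decomposes_component comp_vnapp)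
qed (auto elim!: typed_InpE typed_OutE typed_PAppE typed_PAbsE typed_NAbsE
      intro: decomposes_component component.intros)

lemma decomposes_non_abstraction:
  assumes "dep P n" "typed G P s" "\<not> is_abstraction P"
  shows "decomposes G P n"
proof (cases "s = Pr")
  case True
  then show ?thesis using assms decomposes_process by blast
next
  case False
  then obtain i where "P = PV i" using assms(2,3) typed_non_process by blast
  moreover have "n = 1" using assms(1) \<open>P = PV i\<close> by (auto elim: dep_PVE)
  ultimately show ?thesis using decomposes_component[OF comp_var] by simp
qed

lemma hoio_bisim_sym: "hoio_bisim R \<Longrightarrow> R P Q \<Longrightarrow> R Q P"
  unfolding hoio_bisim_def by (drule conjunct1) blast

lemma hoio_bisim_clauses:
  "hoio_bisim R \<Longrightarrow> R P Q \<Longrightarrow>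
     (\<forall>A. P = PAbs A \<longrightarrow> (\<exists>B. Q = PAbs B \<and> R A B)) \<and>
     (\<forall>A. P = NAbs A \<longrightarrow> (\<exists>B. Q = NAbs B \<and> R A B)) \<and>
     (\<forall>m A P'. trans P (LOut m A) P' \<longrightarrow> (\<exists>B Q'. trans Q (LOut m B) Q' \<and> R A B \<and> R P' Q')) \<and>
     (\<forall>m P'. trans P (LIn m) P' \<longrightarrow> (\<exists>Q'. trans Q (LIn m) Q' \<and> R P' Q')) \<and>
     (\<forall>i P'. P \<equiv>s Par (PV i) P' \<longrightarrow> (\<exists>Q'. Q \<equiv>s Par (PV i) Q' \<and> R P' Q')) \<and>
     (\<forall>i A P'. P \<equiv>s Par (PApp (PV i) A) P' \<longrightarrow>
        (\<exists>B Q'. Q \<equiv>s Par (PApp (PV i) B) Q' \<and> R A B \<and> R P' Q')) \<and>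
     (\<forall>i n P'. P \<equiv>s Par (NApp (PV i) n) P' \<longrightarrow> (\<exists>Q'. Q \<equiv>s Par (NApp (PV i) n) Q' \<and> R P' Q'))"
  unfolding hoio_bisim_def by (drule conjunct2) blast

lemma hoio_bisim_PAbs: "hoio_bisim R \<Longrightarrow> R (PAbs A) Q \<Longrightarrow> \<exists>B. Q = PAbs B \<and> R A B"
  by (drule (1) hoio_bisim_clauses) simp

lemma hoio_bisim_NAbs: "hoio_bisim R \<Longrightarrow> R (NAbs A) Q \<Longrightarrow> \<exists>B. Q = NAbs B \<and> R A B"
  by (drule (1) hoio_bisim_clauses) simp

lemma hoio_bisim_out:
  "hoio_bisim R \<Longrightarrow> R P Q \<Longrightarrow> trans P (LOut m A) P' \<Longrightarrow>
    \<exists>B Q'. trans Q (LOut m B) Q' \<and> R A B \<and> R P' Q'"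
  by (drule (1) hoio_bisim_clauses) (elim conjE, blast)

lemma hoio_bisim_in:
  "hoio_bisim R \<Longrightarrow> R P Q \<Longrightarrow> trans P (LIn m) P' \<Longrightarrow> \<exists>Q'. trans Q (LIn m) Q' \<and> R P' Q'"
  by (drule (1) hoio_bisim_clauses) (elim conjE, blast)

lemma hoio_bisim_var:
  "hoio_bisim R \<Longrightarrow> R P Q \<Longrightarrow> P \<equiv>s Par (PV i) P' \<Longrightarrow> \<exists>Q'. Q \<equiv>s Par (PV i) Q' \<and> R P' Q'"
  by (drule (1) hoio_bisim_clauses) (elim conjE, blast)

lemma hoio_bisim_vapp:
  "hoio_bisim R \<Longrightarrow> R P Q \<Longrightarrow> P \<equiv>s Par (PApp (PV i) A) P' \<Longrightarrow>
    \<exists>B Q'. Q \<equiv>s Par (PApp (PV i) B) Q' \<and> R A B \<and> R P' Q'"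
  by (drule (1) hoio_bisim_clauses) (elim conjE, blast)

lemma hoio_bisim_vnapp:
  "hoio_bisim R \<Longrightarrow> R P Q \<Longrightarrow> P \<equiv>s Par (NApp (PV i) n) P' \<Longrightarrow>
    \<exists>Q'. Q \<equiv>s Par (NApp (PV i) n) Q' \<and> R P' Q'"
  by (drule (1) hoio_bisim_clauses) (elim conjE, blast)

lemma trans_Par_Inp: "P \<equiv>s Par (Inp m A) Rs \<Longrightarrow> trans P (LIn m) (Par A (liftP 0 Rs))"
  by (meson sc_refl tr_cong tr_inp tr_parl_in)

lemma trans_Par_Out: "P \<equiv>s Par (Out m A) Rs \<Longrightarrow> trans P (LOut m A) Rs"
  by (meson sc_comm sc_nil sc_trans tr_cong tr_out tr_parl_out)

lemma hoio_bisim_component_depth_le: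
  assumes hb: "hoio_bisim R" and "R P Q" and "red_depth Q m"
    and P: "P \<equiv>s Par C Rs" and "component G C c" and tR: "typed G Rs Pr" and dR: "dep Rs r"
    and IH: "\<And>n P Q G s m.
      n < c + r \<Longrightarrow> R P Q \<Longrightarrow> typed G P s \<Longrightarrow> dep P n \<Longrightarrow> red_depth Q m \<Longrightarrow> n \<le> m"
  shows "c + r \<le> m"
  using \<open>component G C c\<close>
proof cases
  case (comp_inp s A a m0)
  then obtain Q' where "trans Q (LIn m0) Q'" "R (Par A (liftP 0 Rs)) Q'"
    using hoio_bisim_in[OF hb \<open>R P Q\<close> trans_Par_Inp] P by blast
  then obtain m' where "m = Suc m'" "red_depth Q' m'"
    using red_depth_trans \<open>red_depth Q m\<close> by fastforce
  moreover have "typed (ext_ctx s G) (Par A (liftP 0 Rs)) Pr" "dep (Par A (liftP 0 Rs)) (a + r)"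
    using comp_inp tR dR by (auto intro: t_par typed_liftP_0 d_par dep_liftP)
  ultimately show ?thesis using IH[of "a + r"] comp_inp(2) \<open>R _ Q'\<close> by auto
next
  case (comp_out A s a m0)
  then obtain B Q' where "trans Q (LOut m0 B) Q'" "R A B" "R Rs Q'"
    using hoio_bisim_out[OF hb \<open>R P Q\<close> trans_Par_Out] P by blast
  then obtain b q where "red_depth B b" "red_depth Q' q" "m = Suc (b + q)"
    using red_depth_trans \<open>red_depth Q m\<close> by fastforce
  then show ?thesis
    using IH[of a A B G s b] IH[of r Rs Q' G Pr q] comp_out \<open>R A B\<close> \<open>R Rs Q'\<close> tR dR by force
next
  case (comp_var i)
  then obtain Q' where "Q \<equiv>s Par (PV i) Q'" "R Rs Q'"
    using hoio_bisim_var[OF hb \<open>R P Q\<close>] P by blast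
  then obtain q where "red_depth Q' q" "m = 1 + q"
    using red_depth_scong \<open>red_depth Q m\<close> by (fastforce simp: red_depth_Par_iff red_depth_leaves)
  then show ?thesis using IH[of r Rs Q' G Pr q] comp_var \<open>R Rs Q'\<close> tR dR by force
next
  case (comp_vapp A s a i)
  then obtain B Q' where "Q \<equiv>s Par (PApp (PV i) B) Q'" "R A B" "R Rs Q'"
    using hoio_bisim_vapp[OF hb \<open>R P Q\<close>] P by blast
  then obtain b q where "red_depth B b" "red_depth Q' q" "m = Suc b + q"
    using red_depth_scong \<open>red_depth Q m\<close> by (fastforce simp: red_depth_Par_iff red_depth_Suc_iff)
  then show ?thesis
    using IH[of a A B G s b] IH[of r Rs Q' G Pr q] comp_vapp \<open>R A B\<close> \<open>R Rs Q'\<close> tR dR by force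
next
  case (comp_vnapp i n)
  then obtain Q' where "Q \<equiv>s Par (NApp (PV i) n) Q'" "R Rs Q'"
    using hoio_bisim_vnapp[OF hb \<open>R P Q\<close>] P by blast
  then obtain q where "red_depth Q' q" "m = 1 + q"
    using red_depth_scong \<open>red_depth Q m\<close> by (fastforce simp: red_depth_Par_iff red_depth_leaves)
  then show ?thesis using IH[of r Rs Q' G Pr q] comp_vnapp \<open>R Rs Q'\<close> tR dR by force
qed

lemma hoio_bisim_depth_le:
  assumes hb: "hoio_bisim R"
  shows "R P Q \<Longrightarrow> typed G P s \<Longrightarrow> dep P n \<Longrightarrow> red_depth Q m \<Longrightarrow> n \<le> m"
proof (induction n arbitrary: P Q G s m rule: less_induct)
  case (less n P Q G s m)
  consider (PAbs) A where "P = PAbs A" | (NAbs) A where "P = NAbs A" | (other) "\<not> is_abstraction P"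
    unfolding is_abstraction_def by blast
  then show ?case
  proof cases
    case PAbs
    then obtain B where "Q = PAbs B" "R A B" using hoio_bisim_PAbs[OF hb] less.prems(1) by blast
    then obtain a b s' where "dep A a" "n = Suc a" "red_depth B b" "m = Suc b"
      "typed (ext_ctx s' G) A Pr"
      using PAbs less.prems(2-4) by (auto elim!: dep_PAbsE typed_PAbsE simp: red_depth_Suc_iff)
    then show ?thesis using less.IH[of a A B] \<open>R A B\<close> by fastforce
  next
    case NAbs
    then obtain B where "Q = NAbs B" "R A B" using hoio_bisim_NAbs[OF hb] less.prems(1) by blast
    then obtain a b where "dep A a" "n = Suc a" "red_depth B b" "m = Suc b" "typed G A Pr"
      using NAbs less.prems(2-4) by (auto elim!: dep_NAbsE typed_NAbsE simp: red_depth_Suc_iff)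
    then show ?thesis using less.IH[of a A B] \<open>R A B\<close> by fastforce
  next
    case other
    then have "decomposes G P n" using decomposes_non_abstraction less.prems(2,3) by blast
    then show ?thesis unfolding decomposes_def
      using hoio_bisim_component_depth_le[OF hb less.prems(1,4)] less.IH by auto
  qed
qed

theorem mainTheorem3:
  fixes P Q :: trm
  assumes "well_typed P" and "well_typed Q"
    and "SN P" and "SN Q"
    and "P \<equiv>s Q \<or> P \<sim>HOIO Q"
  shows "depth P = depth Q"
proof -
  obtain G s G' s' where tP: "typed G P s" and tQ: "typed G' Q s'"
    using assms(1,2) unfolding well_typed_def by blast
  obtain n m where n: "dep P n" and m: "dep Q m"
    using dep_exists assms(3,4) tP tQ by meson
  have "n = m" using assms(5)
  proof
    assume "P \<equiv>s Q"
    then show "n = m" using red_depth_scong red_depth_unique red_depth_dep n m by blast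
  next
    assume "P \<sim>HOIO Q"
    then obtain R where "hoio_bisim R" "R P Q" unfolding hoio_sim_def by blast
    then have "n \<le> m" "m \<le> n"
      using hoio_bisim_depth_le hoio_bisim_sym tP tQ n m red_depth_dep by meson+
    then show "n = m" by simp
  qed
  then show ?thesis using depth_eqI n m by simp
qed

end
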